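(* Let $K$ be a field of characteristic $p>0$ such that $K/k$ is a finitely generated field extension, where $k=\bigcap_{n\ge0}K^{p^n}$. If $K\neq k$, then $\operatorname{Diff}_k(K)$ is not finitely generated as a $K$-algebra.
   Context: $\operatorname{Diff}_k(K)$ is the union over $n\ge0$ of the sets of $k$-linear maps $D:K\to K$ with $[b_0,[b_1,[\ldots,[b_n,D]\ldots]]]=0$ for all $b_i\in K$ (elements acting by multiplication, $[X,Y]=XY-YX$); it is a ring under composition containing $K$. *)

theory Defs
  imports Main
begin

text \<open>The field K is the whole type 'a. k = intersection over n of K^(p^n), p = CHAR('a).\<close>
definition perfect_core :: "'a::field set" where
  "perfect_core = (\<Inter>n. range (\<lambda>x::'a. x ^ (CHAR('a) ^ n)))"

definition subfield_gen :: "'a::field set \<Rightarrow> 'a set" where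
  "subfield_gen A = \<Inter>{F. A \<subseteq> F \<and> 0 \<in> F \<and> 1 \<in> F \<and>
      (\<forall>x\<in>F. \<forall>y\<in>F. x + y \<in> F \<and> x * y \<in> F) \<and>
      (\<forall>x\<in>F. - x \<in> F \<and> inverse x \<in> F)}"

definition fg_field_ext :: "'a::field set \<Rightarrow> bool" where
  "fg_field_ext k \<longleftrightarrow> (\<exists>S. finite S \<and> subfield_gen (k \<union> S) = UNIV)"

definition k_linear :: "'a::field set \<Rightarrow> ('a \<Rightarrow> 'a) \<Rightarrow> bool" where
  "k_linear k D \<longleftrightarrow> (\<forall>x y. D (x + y) = D x + D y) \<and> (\<forall>c\<in>k. \<forall>x. D (c * x) = c * D x)"

definition comm :: "'a::field \<Rightarrow> ('a \<Rightarrow> 'a) \<Rightarrow> ('a \<Rightarrow> 'a)" where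
  "comm b D = (\<lambda>x. b * D x - D (b * x))"

fun iter_comm :: "'a::field list \<Rightarrow> ('a \<Rightarrow> 'a) \<Rightarrow> ('a \<Rightarrow> 'a)" where
  "iter_comm [] D = D"
| "iter_comm (b # bs) D = comm b (iter_comm bs D)"

definition Diff :: "'a::field set \<Rightarrow> ('a \<Rightarrow> 'a) set" where
  "Diff k = {D. k_linear k D \<and>
     (\<exists>n::nat. \<forall>bs. length bs = Suc n \<longrightarrow> iter_comm bs D = (\<lambda>_. 0))}"

text \<open>Subring of (K \<Rightarrow> K, +, composition) generated by K (multiplication maps) and G,
  i.e. the K-subalgebra generated by G.\<close>
inductive_set K_alg_gen :: "('a::field \<Rightarrow> 'a) set \<Rightarrow> ('a \<Rightarrow> 'a) set" for G where
  scal: "(\<lambda>x. c * x) \<in> K_alg_gen G"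
| gen: "g \<in> G \<Longrightarrow> g \<in> K_alg_gen G"
| add: "f \<in> K_alg_gen G \<Longrightarrow> g \<in> K_alg_gen G \<Longrightarrow> (\<lambda>x. f x + g x) \<in> K_alg_gen G"
| comp: "f \<in> K_alg_gen G \<Longrightarrow> g \<in> K_alg_gen G \<Longrightarrow> f \<circ> g \<in> K_alg_gen G"

definition fg_K_algebra :: "('a::field \<Rightarrow> 'a) set \<Rightarrow> bool" where
  "fg_K_algebra A \<longleftrightarrow> (\<exists>G. finite G \<and> G \<subseteq> A \<and> K_alg_gen G = A)"

end

(*
  A differential operator of order at most n commutes with multiplication by every
  p^n-th power: if all commutators [b, D] commute with c, then D (c y) = c D y - e y
  for a fixed e, and after p iterations the error term p e c^(p-1) y vanishes.
  So a K-algebra generated by finitely many differential operators, all of order at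
  most M, consists of operators commuting with K^(p^M).

  Conversely, take z outside K^(p^n) (possible as K <> k) and Q = p^(M+n). Then
  c = z^(p^M) is not in K^Q, so some K^Q-linear D has D 1 = 0 and D c = 1. Since
  k is contained in K^Q and K = K^Q[S] for a finite S, and ad(s)^Q = ad(s^Q) kills D,
  this D is a differential operator over k, yet it does not commute with c.
*)
theory Submission
  imports Defs "HOL-Computational_Algebra.Primes" "HOL.Vector_Spaces"
begin

definition comms_vanish_on :: "'a::field set \<Rightarrow> nat \<Rightarrow> ('a \<Rightarrow> 'a) \<Rightarrow> bool" where
  "comms_vanish_on B n X \<longleftrightarrow>
     (\<forall>bs. length bs = n \<longrightarrow> set bs \<subseteq> B \<longrightarrow> iter_comm bs X = (\<lambda>_. 0))"

abbreviation comms_vanish :: "nat \<Rightarrow> ('a::field \<Rightarrow> 'a) \<Rightarrow> bool" where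
  "comms_vanish \<equiv> comms_vanish_on UNIV"

lemma iter_comm_append: "iter_comm (bs @ cs) X = iter_comm bs (iter_comm cs X)"
  by (induction bs) auto

lemma comm_zero [simp]: "comm b (\<lambda>_. 0) = (\<lambda>_. 0)"
  by (simp add: comm_def)

lemma iter_comm_zero [simp]: "iter_comm bs (\<lambda>_. 0) = (\<lambda>_. 0)"
  by (induction bs) auto

lemma iter_comm_add: "iter_comm bs (\<lambda>y. X y + Y y) = (\<lambda>y. iter_comm bs X y + iter_comm bs Y y)"
  by (induction bs) (auto simp: comm_def fun_eq_iff algebra_simps)

lemma iter_comm_mult_left: "iter_comm bs (\<lambda>y. b * X y) = (\<lambda>y. b * iter_comm bs X y)"
  by (induction bs) (auto simp: comm_def fun_eq_iff algebra_simps)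

lemma iter_comm_mult_arg: "iter_comm bs (\<lambda>y. X (c * y)) = (\<lambda>y. iter_comm bs X (c * y))"
  by (induction bs) (auto simp: comm_def fun_eq_iff algebra_simps)

lemma comm_commute: "comm b (comm c X) = comm c (comm b X)"
  by (auto simp: comm_def fun_eq_iff algebra_simps)

lemma funpow_comm_commute: "(comm b ^^ m) (comm c X) = comm c ((comm b ^^ m) X)"
  by (induction m) (auto simp: comm_commute)

lemma comms_vanish_on_0 [simp]: "comms_vanish_on B 0 X \<longleftrightarrow> X = (\<lambda>_. 0)"
  by (simp add: comms_vanish_on_def)

lemma comms_vanish_on_Suc:
  "comms_vanish_on B (Suc n) X \<longleftrightarrow> (\<forall>b\<in>B. comms_vanish_on B n (comm b X))"
proof -
  have "(\<forall>bs. length bs = Suc n \<longrightarrow> set bs \<subseteq> B \<longrightarrow> P bs) \<longleftrightarrow>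
        (\<forall>b\<in>B. \<forall>cs. length cs = n \<longrightarrow> set cs \<subseteq> B \<longrightarrow> P (cs @ [b]))" for P
    by (metis Un_subset_iff empty_subsetI insert_subset length_Suc_conv_rev
        length_append_singleton set_append set_simps)
  then show ?thesis
    by (simp add: comms_vanish_on_def iter_comm_append)
qed

lemma comms_vanish_on_zero [simp]: "comms_vanish_on B n (\<lambda>_. 0)"
  by (simp add: comms_vanish_on_def)

lemma comms_vanish_on_mono:
  assumes "comms_vanish_on B m X" "m \<le> n"
  shows "comms_vanish_on B n X"
  using assms(2,1)
  by (induction n rule: dec_induct) (auto simp: comms_vanish_on_def length_Suc_conv)

lemma comms_vanish_on_add:
  "comms_vanish_on B n X \<Longrightarrow> comms_vanish_on B n Y \<Longrightarrow> comms_vanish_on B n (\<lambda>y. X y + Y y)"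
  by (simp add: comms_vanish_on_def iter_comm_add)

lemma comms_vanish_on_mult_left:
  "comms_vanish_on B n X \<Longrightarrow> comms_vanish_on B n (\<lambda>y. b * X y)"
  by (simp add: comms_vanish_on_def iter_comm_mult_left)

lemma comms_vanish_on_mult_arg:
  "comms_vanish_on B n X \<Longrightarrow> comms_vanish_on B n (\<lambda>y. X (c * y))"
  by (simp add: comms_vanish_on_def iter_comm_mult_arg)

lemma Diff_iff: "D \<in> Diff k \<longleftrightarrow> k_linear k D \<and> (\<exists>n. comms_vanish (Suc n) D)"
  by (simp add: Diff_def comms_vanish_on_def)

lemma k_linear_subset: "k_linear R D \<Longrightarrow> k \<subseteq> R \<Longrightarrow> k_linear k D"
  by (auto simp: k_linear_def)

lemma k_linear_comm: "k_linear R X \<Longrightarrow> k_linear R (comm b X)"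
  by (auto simp: k_linear_def comm_def algebra_simps)

lemma comm_k_linear_eq_zero: "k_linear R X \<Longrightarrow> c \<in> R \<Longrightarrow> comm c X = (\<lambda>_. 0)"
  by (simp add: k_linear_def comm_def)

lemma comm_add:
  assumes "\<And>x y. X (x + y) = X x + X y"
  shows "comm (b + c) X = (\<lambda>y. comm b X y + comm c X y)"
  by (auto simp: assms comm_def fun_eq_iff algebra_simps)

lemma comm_mult: "comm (b * c) X = (\<lambda>y. b * comm c X y + comm b X (c * y))"
  by (auto simp: comm_def fun_eq_iff algebra_simps)

section \<open>Operators of bounded order commute with high p-th powers\<close>

definition commutes_with_mult :: "'a::field set \<Rightarrow> ('a \<Rightarrow> 'a) \<Rightarrow> bool" where
  "commutes_with_mult R X \<longleftrightarrow> (\<forall>c\<in>R. \<forall>y. X (c * y) = c * X y)"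

lemma commutes_with_CHAR_power:
  fixes D :: "'a::field \<Rightarrow> 'a"
  assumes "CHAR('a) > 0" and comm_c: "\<And>b y. comm b D (c * y) = c * comm b D y"
  shows "D (c ^ CHAR('a) * y) = c ^ CHAR('a) * D y"
proof -
  define e where "e = c * D 1 - D c"
  have step: "D (c * y) = c * D y - e * y" for y
    using comm_c[of y 1] by (simp add: comm_def e_def algebra_simps)
  have powers: "D (c ^ Suc m * y) = c ^ Suc m * D y - of_nat (Suc m) * e * c ^ m * y" for m
  proof (induction m)
    case 0
    then show ?case using step by simp
  next
    case (Suc m)
    have "D (c ^ Suc (Suc m) * y) = c * D (c ^ Suc m * y) - e * (c ^ Suc m * y)"
      using step[of "c ^ Suc m * y"] by (simp add: mult.assoc)
    also have "\<dots> = c * (c ^ Suc m * D y - of_nat (Suc m) * e * c ^ m * y) - e * (c ^ Suc m * y)"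
      by (simp only: Suc)
    also have "\<dots> = c ^ Suc (Suc m) * D y - of_nat (Suc (Suc m)) * e * c ^ Suc m * y"
      by (simp add: algebra_simps)
    finally show ?case .
  qed
  have "Suc (CHAR('a) - 1) = CHAR('a)"
    using assms(1) by simp
  then show ?thesis
    using powers[of "CHAR('a) - 1"] by simp
qed

lemma order_le_commutes_with_CHAR_powers:
  fixes D :: "'a::field \<Rightarrow> 'a"
  assumes "CHAR('a) > 0" and "comms_vanish (Suc n) D"
  shows "commutes_with_mult (range (\<lambda>c. c ^ CHAR('a) ^ n)) D"
  using assms(2)
proof (induction n arbitrary: D)
  case 0
  then show ?case
    by (auto simp: commutes_with_mult_def comms_vanish_on_Suc comm_def fun_eq_iff)
next
  case (Suc n)
  have "D ((c ^ CHAR('a) ^ n) ^ CHAR('a) * y) = (c ^ CHAR('a) ^ n) ^ CHAR('a) * D y" for c y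
  proof (rule commutes_with_CHAR_power[OF assms(1)])
    fix b z
    show "comm b D (c ^ CHAR('a) ^ n * z) = c ^ CHAR('a) ^ n * comm b D z"
      using Suc.IH[of "comm b D"] Suc.prems by (simp add: comms_vanish_on_Suc commutes_with_mult_def)
  qed
  then show ?case
    by (simp add: commutes_with_mult_def power_mult[symmetric] mult.commute)
qed

lemma K_alg_gen_commutes_with_mult:
  assumes "\<forall>g\<in>G. commutes_with_mult R g" and "f \<in> K_alg_gen G"
  shows "commutes_with_mult R f"
  using assms(2)
  by induction (use assms(1) in \<open>auto simp: commutes_with_mult_def algebra_simps\<close>)

lemma fg_Diff_commutes_with_CHAR_powers:
  assumes "CHAR('a::field) > 0" and "fg_K_algebra (Diff (k :: 'a set))"
  shows "\<exists>M. \<forall>D\<in>Diff k. commutes_with_mult (range (\<lambda>c. c ^ CHAR('a) ^ M)) D"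
proof -
  obtain G where G: "finite G" "G \<subseteq> Diff k" "K_alg_gen G = Diff k"
    using assms(2) unfolding fg_K_algebra_def by blast
  have "\<forall>g\<in>G. \<exists>n. comms_vanish (Suc n) g"
    using G(2) by (auto simp: Diff_iff)
  then obtain ord where ord: "\<forall>g\<in>G. comms_vanish (Suc (ord g)) g"
    by (metis bchoice)
  define M where "M = Max (ord ` G)"
  have "comms_vanish (Suc M) g" if "g \<in> G" for g
    using ord that G(1) by (auto simp: M_def intro: comms_vanish_on_mono)
  then have "\<forall>g\<in>G. commutes_with_mult (range (\<lambda>c. c ^ CHAR('a) ^ M)) g"
    using order_le_commutes_with_CHAR_powers[OF assms(1)] by blast
  then show ?thesis
    using K_alg_gen_commutes_with_mult G(3) by blast
qed

section \<open>Linear maps over K^Q are differential operators\<close>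

lemma frobenius_power_add:
  assumes "CHAR('a::field) > 0"
  shows "((x::'a) + y) ^ (CHAR('a) ^ N) = x ^ (CHAR('a) ^ N) + y ^ (CHAR('a) ^ N)"
  using assms by (intro freshmans_dream') (auto simp: prime_CHAR_semidom)

lemma frobenius_power_minus:
  assumes "CHAR('a::field) > 0"
  shows "(- (x::'a)) ^ (CHAR('a) ^ N) = - (x ^ (CHAR('a) ^ N))"
proof -
  have "x ^ (CHAR('a) ^ N) + (- x) ^ (CHAR('a) ^ N) = (x + - x) ^ (CHAR('a) ^ N)"
    using frobenius_power_add[OF assms] by metis
  also have "\<dots> = 0"
    using assms by simp
  finally show ?thesis
    by (simp add: add_eq_0_iff)
qed

lemma frobenius_power_inject:
  assumes "CHAR('a::field) > 0" and "(x::'a) ^ (CHAR('a) ^ N) = y ^ (CHAR('a) ^ N)"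
  shows "x = y"
proof -
  have "((x - y) + y) ^ (CHAR('a) ^ N) = (x - y) ^ (CHAR('a) ^ N) + y ^ (CHAR('a) ^ N)"
    by (rule frobenius_power_add[OF assms(1)])
  then have "(x - y) ^ (CHAR('a) ^ N) = 0"
    using assms(2) by simp
  then show ?thesis
    by simp
qed

lemma funpow_comm_eq_sum:
  "(comm a ^^ m) X y = (\<Sum>j\<le>m. of_nat (m choose j) * (-1)^j * a^(m-j) * X (a^j * y))"
proof (induction m arbitrary: y)
  case 0
  then show ?case by simp
next
  case (Suc m)
  define t where "t j = of_nat (m choose j) * (-1)^j * a^(m-j) * X (a^Suc j * y)" for j
  define t' where "t' j = of_nat (m choose Suc j) * (-1)^Suc j * a^(m-j) * X (a^Suc j * y)" for j
  have "(comm a ^^ Suc m) X y = a * (comm a ^^ m) X y - (comm a ^^ m) X (a * y)"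
    by (simp add: comm_def)
  also have "(comm a ^^ m) X (a * y) = (\<Sum>j\<le>m. t j)"
    by (simp add: Suc t_def ac_simps)
  also have "a * (comm a ^^ m) X y =
      (\<Sum>j\<le>Suc m. of_nat (m choose j) * (-1)^j * a^(Suc m-j) * X (a^j * y))"
    by (simp add: Suc sum_distrib_left algebra_simps Suc_diff_le binomial_eq_0)
  also have "\<dots> = a^Suc m * X y + (\<Sum>j\<le>m. t' j)"
    by (subst sum.atMost_Suc_shift) (simp add: t'_def)
  finally have "(comm a ^^ Suc m) X y = a^Suc m * X y + (\<Sum>j\<le>m. t' j - t j)"
    by (simp add: sum_subtractf)
  also have "(\<Sum>j\<le>m. t' j - t j) =
      (\<Sum>j\<le>m. of_nat (Suc m choose Suc j) * (-1)^Suc j * a^(m-j) * X (a^Suc j * y))"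
    by (rule sum.cong) (simp_all add: t_def t'_def algebra_simps)
  finally show ?case
    by (subst sum.atMost_Suc_shift) simp
qed

text \<open>The Freshman's dream for the commuting operators \<open>X \<mapsto> a * X\<close> and
  \<open>X \<mapsto> X \<circ> times a\<close>, whose difference is \<open>comm a\<close>.\<close>

lemma funpow_comm_CHAR:
  fixes X :: "'a::field \<Rightarrow> 'a"
  assumes "CHAR('a) > 0"
  shows "(comm a ^^ CHAR('a)) X = comm (a ^ CHAR('a)) X"
proof
  fix y
  define p where "p = CHAR('a)"
  have p: "prime p"
    unfolding p_def using assms by (simp add: prime_CHAR_semidom)
  have "(comm a ^^ p) X y = (\<Sum>j\<le>p. of_nat (p choose j) * (-1)^j * a^(p-j) * X (a^j * y))"
    by (rule funpow_comm_eq_sum)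
  also have "\<dots> = (\<Sum>j\<in>{0,p}. of_nat (p choose j) * (-1)^j * a^(p-j) * X (a^j * y))"
  proof (intro sum.mono_neutral_right ballI)
    fix j assume "j \<in> {..p} - {0, p}"
    then have "p dvd (p choose j)"
      using p by (intro dvd_choose_prime) auto
    then have "of_nat (p choose j) = (0 :: 'a)"
      unfolding p_def using of_nat_eq_0_iff_char_dvd by blast
    then show "of_nat (p choose j) * (-1)^j * a^(p-j) * X (a^j * y) = 0"
      by simp
  qed auto
  also have "\<dots> = a ^ p * X y + (-1) ^ p * X (a ^ p * y)"
    using prime_gt_0_nat[OF p] by simp
  also have "(-1::'a) ^ p = - 1"
    using minus_power_prime_CHAR[where 'a='a, of p 1] p p_def by simp
  finally show "(comm a ^^ CHAR('a)) X y = comm (a ^ CHAR('a)) X y"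
    by (simp add: comm_def[of "a ^ CHAR('a)"] p_def)
qed

lemma funpow_comm_CHAR_power:
  fixes X :: "'a::field \<Rightarrow> 'a"
  assumes "CHAR('a) > 0"
  shows "(comm a ^^ (CHAR('a) ^ n)) X = comm (a ^ (CHAR('a) ^ n)) X"
proof (induction n arbitrary: X)
  case 0
  then show ?case by simp
next
  case (Suc n)
  have "comm a ^^ (CHAR('a) ^ Suc n) = (comm a ^^ (CHAR('a) ^ n)) ^^ CHAR('a)"
    by (simp add: funpow_mult mult.commute)
  also have "comm a ^^ (CHAR('a) ^ n) = comm (a ^ (CHAR('a) ^ n))"
    using Suc by auto
  finally show ?case
    using funpow_comm_CHAR[OF assms, of "a ^ (CHAR('a) ^ n)"]
    by (simp add: power_mult[symmetric] mult.commute)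
qed

text \<open>A pigeonhole argument: commutators commute, and a word of length \<open>sum k G\<close>
  over \<open>G\<close> contains some letter \<open>g\<close> at least \<open>k g\<close> times.\<close>

lemma comms_vanish_on_if_funpow_comm:
  assumes "finite G" "G \<noteq> {}"
    and "\<forall>g\<in>G. (comm g ^^ k g) X = (\<lambda>_. 0)" and "sum k G \<le> n"
  shows "comms_vanish_on G n X"
  using assms(3,4)
proof (induction n arbitrary: X k)
  case 0
  obtain g where "g \<in> G"
    using assms(2) by blast
  then have "k g = 0"
    using 0 assms(1) member_le_sum[of g G k] by simp
  then show ?case
    using 0 \<open>g \<in> G\<close> by force
next
  case (Suc n)
  show ?case
    unfolding comms_vanish_on_Suc
  proof
    fix g assume g: "g \<in> G"
    show "comms_vanish_on G n (comm g X)"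
    proof (cases "k g = 0")
      case True
      then show ?thesis
        using Suc.prems(1) g by force
    next
      case False
      define k' where "k' h = k h - (if h = g then 1 else 0)" for h
      have "sum k' G = sum k G - 1"
        using False g assms(1) by (simp add: k'_def sum_subtractf_nat)
      then have "sum k' G \<le> n"
        using Suc.prems(2) by simp
      moreover have "(comm h ^^ k' h) (comm g X) = (\<lambda>_. 0)" if h: "h \<in> G" for h
      proof (cases "h = g")
        case True
        have "(comm g ^^ (k g - 1)) (comm g X) = (comm g ^^ k g) X"
          using False by (cases "k g") (simp_all add: funpow_Suc_right del: funpow.simps)
        then show ?thesis
          using True Suc.prems(1) g by (simp add: k'_def)
      next
        case False
        then show ?thesis
          using Suc.prems(1) h by (simp add: k'_def funpow_comm_commute)
      qed
      ultimately show ?thesis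
        using Suc.IH by blast
    qed
  qed
qed

inductive_set ring_adjoin :: "'a::field set \<Rightarrow> 'a set \<Rightarrow> 'a set" for R S where
  base: "r \<in> R \<Longrightarrow> r \<in> ring_adjoin R S"
| gen: "s \<in> S \<Longrightarrow> s \<in> ring_adjoin R S"
| add: "x \<in> ring_adjoin R S \<Longrightarrow> y \<in> ring_adjoin R S \<Longrightarrow> x + y \<in> ring_adjoin R S"
| mult: "x \<in> ring_adjoin R S \<Longrightarrow> y \<in> ring_adjoin R S \<Longrightarrow> x * y \<in> ring_adjoin R S"

lemma ring_adjoin_mono:
  assumes "S \<subseteq> T"
  shows "ring_adjoin R S \<subseteq> ring_adjoin R T"
proof
  fix x assume "x \<in> ring_adjoin R S"
  then show "x \<in> ring_adjoin R T"
    by induction (use assms in \<open>auto intro: ring_adjoin.intros\<close>)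
qed

lemma ring_adjoin_power: "1 \<in> R \<Longrightarrow> x \<in> ring_adjoin R S \<Longrightarrow> x ^ n \<in> ring_adjoin R S"
  by (induction n) (auto intro: ring_adjoin.intros)

lemma comms_vanish_on_ring_adjoin:
  assumes "k_linear R X" and "comms_vanish_on S n X"
  shows "comms_vanish_on (ring_adjoin R S) n X"
  using assms
proof (induction n arbitrary: X)
  case 0
  then show ?case by simp
next
  case (Suc n)
  have "comms_vanish_on (ring_adjoin R S) n (comm b X)" if "b \<in> ring_adjoin R S" for b
    using that
  proof induction
    case (base r)
    then show ?case
      using Suc.prems(1) by (simp add: comm_k_linear_eq_zero)
  next
    case (gen s)
    then show ?case
      using Suc.prems Suc.IH[of "comm s X"] by (simp add: k_linear_comm comms_vanish_on_Suc)
  next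
    case (add x y)
    then show ?case
      using Suc.prems(1) by (simp add: k_linear_def comm_add comms_vanish_on_add)
  next
    case (mult x y)
    then show ?case
      by (simp add: comm_mult comms_vanish_on_add comms_vanish_on_mult_left comms_vanish_on_mult_arg)
  qed
  then show ?case
    by (simp add: comms_vanish_on_Suc)
qed

lemma ring_adjoin_CHAR_powers_UNIV:
  fixes S :: "'a::field set"
  assumes ch: "CHAR('a) > 0" and Q: "Q = CHAR('a) ^ N"
    and k: "k \<subseteq> range (\<lambda>x. x ^ Q)" and gen: "subfield_gen (k \<union> S) = UNIV"
  shows "ring_adjoin (range (\<lambda>x. x ^ Q)) S = UNIV"
proof -
  let ?F = "ring_adjoin (range (\<lambda>x. x ^ Q)) S"
  have Q_pos: "Q > 0"
    using ch Q by simp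
  have pow: "a ^ Q \<in> ?F" for a
    by (rule ring_adjoin.base) simp
  have one: "1 \<in> range (\<lambda>x::'a. x ^ Q)"
    by (metis power_one rangeI)
  have zero: "0 \<in> ?F"
    using pow[of 0] Q_pos by (simp add: zero_power)
  have "- 1 \<in> ?F"
    using pow[of "- 1"] frobenius_power_minus[OF ch, of 1 N] Q by simp
  then have uminus: "- x \<in> ?F" if "x \<in> ?F" for x
    using ring_adjoin.mult[OF _ that] by force
  have inverse: "inverse x \<in> ?F" if x: "x \<in> ?F" for x
  proof (cases "x = 0")
    case True
    then show ?thesis using zero by simp
  next
    case False
    have "x ^ Q = x ^ (Q - 1) * x"
      using Q_pos by (metis Suc_diff_1 power_Suc2)
    then have "inverse x = x ^ (Q - 1) * inverse x ^ Q"
      using False by (simp add: power_inverse field_simps)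
    then show ?thesis
      using ring_adjoin.mult[OF ring_adjoin_power[OF one x] pow] by metis
  qed
  have "subfield_gen (k \<union> S) \<subseteq> ?F"
    unfolding subfield_gen_def using k zero one uminus inverse
    by (intro Inter_lower) (auto intro: ring_adjoin.intros)
  then show ?thesis
    using gen by auto
qed

lemma exists_k_linear_CHAR_powers_separating:
  fixes c :: "'a::field"
  assumes ch: "CHAR('a) > 0" and Q: "Q = CHAR('a) ^ N" and c: "c \<notin> range (\<lambda>x. x ^ Q)"
  shows "\<exists>D. k_linear (range (\<lambda>x. x ^ Q)) D \<and> D c = 1 \<and> D 1 = 0"
proof -
  define scale :: "'a \<Rightarrow> 'a \<Rightarrow> 'a" where "scale a x = a ^ Q * x" for a x
  interpret vs: vector_space scale
  proof
    fix a b x y :: 'a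
    show "scale a (x + y) = scale a x + scale a y"
      by (simp add: scale_def algebra_simps)
    show "scale (a + b) x = scale a x + scale b x"
      using frobenius_power_add[OF ch, of a b N] Q by (simp add: scale_def algebra_simps)
    show "scale a (scale b x) = scale (a * b) x"
      by (simp add: scale_def power_mult_distrib)
    show "scale 1 x = x"
      by (simp add: scale_def)
  qed
  interpret vsp: vector_space_pair scale scale ..
  have "Q > 0"
    using ch Q by simp
  then have "c \<noteq> 0"
    using c by (metis rangeI zero_power)
  moreover have "1 \<notin> vs.span {c}"
  proof
    assume "1 \<in> vs.span {c}"
    then obtain a where "a ^ Q * c = 1"
      by (auto simp: vs.span_singleton scale_def)
    then have "c = inverse a ^ Q"
      by (metis inverse_unique power_inverse)
    then show False
      using c by auto
  qed
  ultimately have independent: "vs.independent {1, c}"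
    by (simp add: vs.independent_insert vs.span_empty)
  define D where "D = vsp.construct {1, c} (\<lambda>b. if b = c then 1 else 0)"
  have "Vector_Spaces.linear scale scale D"
    unfolding D_def by (rule vsp.linear_construct[OF independent])
  then have "k_linear (range (\<lambda>x. x ^ Q)) D"
    by (auto simp: k_linear_def scale_def vsp.linear_add dest: vsp.linear_scale)
  moreover have "c \<noteq> 1"
    using c by (metis power_one rangeI)
  then have "D c = 1" "D 1 = 0"
    unfolding D_def by (simp_all add: vsp.construct_basis[OF independent])
  ultimately show ?thesis
    by blast
qed

lemma k_linear_CHAR_powers_finite_order:
  fixes D :: "'a::field \<Rightarrow> 'a" and S :: "'a set"
  assumes ch: "CHAR('a) > 0" and Q: "Q = CHAR('a) ^ N"
    and lin: "k_linear (range (\<lambda>x. x ^ Q)) D"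
    and fin: "finite S" and gen: "ring_adjoin (range (\<lambda>x. x ^ Q)) S = UNIV"
  shows "\<exists>n. comms_vanish n D"
proof -
  \<comment> \<open>\<open>1\<close> is added only to make the generating set nonempty\<close>
  define G where "G = insert 1 S"
  have "finite G" "G \<noteq> {}"
    using fin by (auto simp: G_def)
  moreover have "\<forall>g\<in>G. (comm g ^^ Q) D = (\<lambda>_. 0)"
    using funpow_comm_CHAR_power[OF ch] comm_k_linear_eq_zero[OF lin] Q by simp
  ultimately have "comms_vanish_on G (\<Sum>g\<in>G. Q) D"
    by (intro comms_vanish_on_if_funpow_comm) auto
  then have "comms_vanish_on (ring_adjoin (range (\<lambda>x. x ^ Q)) G) (\<Sum>g\<in>G. Q) D"
    by (rule comms_vanish_on_ring_adjoin[OF lin])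
  moreover have "ring_adjoin (range (\<lambda>x. x ^ Q)) G = UNIV"
    using gen ring_adjoin_mono[of S G] by (auto simp: G_def)
  ultimately show ?thesis
    by auto
qed

lemma Diff_perfect_core_not_commutes_with_CHAR_powers:
  assumes ch: "CHAR('a::field) > 0" and fg: "fg_field_ext (perfect_core :: 'a set)"
    and proper: "(perfect_core :: 'a set) \<noteq> UNIV"
  shows "\<exists>D\<in>Diff (perfect_core :: 'a set). \<not> commutes_with_mult (range (\<lambda>c. c ^ CHAR('a) ^ M)) D"
proof -
  obtain S :: "'a set" where S: "finite S" "subfield_gen (perfect_core \<union> S) = UNIV"
    using fg unfolding fg_field_ext_def by blast
  obtain z :: 'a and n where z: "z \<notin> range (\<lambda>x. x ^ CHAR('a) ^ n)"
    using proper unfolding perfect_core_def by blast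
  define Q where "Q = CHAR('a) ^ (M + n)"
  define c where "c = z ^ CHAR('a) ^ M"
  have "c \<notin> range (\<lambda>x. x ^ Q)"
  proof
    assume "c \<in> range (\<lambda>x. x ^ Q)"
    then obtain w where "z ^ CHAR('a) ^ M = (w ^ CHAR('a) ^ n) ^ CHAR('a) ^ M"
      by (auto simp: c_def Q_def power_add power_mult[symmetric] mult.commute)
    then have "z = w ^ CHAR('a) ^ n"
      by (rule frobenius_power_inject[OF ch])
    then show False
      using z by blast
  qed
  then obtain D where D: "k_linear (range (\<lambda>x. x ^ Q)) D" "D c = 1" "D 1 = 0"
    using exists_k_linear_CHAR_powers_separating[OF ch Q_def] by blast
  have core: "perfect_core \<subseteq> range (\<lambda>x::'a. x ^ Q)"
    unfolding perfect_core_def Q_def by blast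
  obtain m where "comms_vanish m D"
    using k_linear_CHAR_powers_finite_order[OF ch Q_def D(1) S(1)]
      ring_adjoin_CHAR_powers_UNIV[OF ch Q_def core S(2)] by blast
  then have "D \<in> Diff perfect_core"
    using D(1) core comms_vanish_on_mono[of UNIV m D "Suc m"]
    by (auto simp: Diff_iff intro: k_linear_subset)
  moreover have "\<not> commutes_with_mult (range (\<lambda>c. c ^ CHAR('a) ^ M)) D"
    using D(2,3) unfolding commutes_with_mult_def c_def
    by (metis mult.right_neutral mult_zero_right one_neq_zero rangeI)
  ultimately show ?thesis
    by blast
qed

theorem mainTheorem16:
  assumes "CHAR('a::field) > 0"
    and "fg_field_ext (perfect_core :: 'a set)"
    and "(perfect_core :: 'a set) \<noteq> UNIV"
  shows "\<not> fg_K_algebra (Diff (perfect_core :: 'a set))"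
proof
  assume "fg_K_algebra (Diff (perfect_core :: 'a set))"
  then obtain M where "\<forall>D\<in>Diff (perfect_core :: 'a set).
      commutes_with_mult (range (\<lambda>c. c ^ CHAR('a) ^ M)) D"
    using fg_Diff_commutes_with_CHAR_powers[OF assms(1)] by blast
  moreover obtain D where "D \<in> Diff (perfect_core :: 'a set)"
      "\<not> commutes_with_mult (range (\<lambda>c. c ^ CHAR('a) ^ M)) D"
    using Diff_perfect_core_not_commutes_with_CHAR_powers[OF assms] by blast
  ultimately show False
    by blast
qed

end
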